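(* Let $\sigma^2>0$, $\mu\in\mathbb{C}$, $\zeta=|\mu|^2$, and let $y_1,y_2,\dots$ be i.i.d. random variables with $y_s=|X_s|^2$, where $X_s\sim\mathcal{CN}(\mu,\sigma^2)$ (a circularly-symmetric complex Gaussian with mean $\mu$ and variance $\sigma^2$). Set $f=\mathbb{E}[y_s]=\zeta+\sigma^2$ and $\nu^2=\sigma^4+2\sigma^2\zeta$ (the variance of $y_s$). For $n\geq 1$ let $\hat f_n=\frac1n\sum_{s=1}^n y_s$. Then for every $n\ge 1$ and every $0<\delta\le \nu^2/\sigma^2$, $$\mathbb{P}\big(|\hat f_n-f|>\delta\big)\le 2\exp\!\Big(-\frac{n\delta^2}{4\nu^2}\Big).$$
   Context: In the paper, $y_s$ is the received signal strength $|\mathbf{w}_{h,i}^H\mathbf{z}|^2$ obtained when sampling beamforming vector $\mathbf{w}_{h,i}$, $\zeta=\zeta_{h,i}=|\mathbf{w}_{h,i}^H\mathbf{h}|^2$, $f=f(\mathcal{P}_{h,i})$, and $n=N_{h,i}(t_h)$ is the number of samples of that arm. *)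

theory Defs
  imports "HOL-Probability.Probability"
begin

definition cn_density :: "complex \<Rightarrow> real \<Rightarrow> complex \<Rightarrow> real" where
  "cn_density mu s2 z = exp (- ((cmod (z - mu))^2 / s2)) / (pi * s2)"

end

theory Submission
  imports Defs
begin

(* Completing the square in the CN(mu, s2) density gives, for t s2 < 1,
     E exp (t (|X|^2 - f)) = exp (t |mu|^2 / (1 - t s2) - t f) / (1 - t s2),
   and ln (1 - u) >= - u - u^2 for u <= 1/2 bounds this by exp (nu^2 t^2) once t s2 <= 1/2.
   Independence multiplies these bounds over the n samples, and the Chernoff bound with
   t = delta / (2 nu^2), admissible because delta <= nu^2 / s2, bounds each of the two tails
   of the sample mean by exp (- n delta^2 / (4 nu^2)). *)

lemma ln_one_minus_lower_bound:
  fixes u :: real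
  assumes "u \<le> 1/2"
  shows "- u - u^2 \<le> ln (1 - u)"
proof (cases "u \<le> 0")
  case nonpos: True
  show ?thesis
  proof (cases "u \<ge> -1")
    case True
    have "(-u) - (-u)^2 \<le> ln (1 + (-u))"
      by (rule ln_one_plus_pos_lower_bound) (use True nonpos in auto)
    then show ?thesis by simp
  next
    case False
    then have "- u - u^2 \<le> 0"
      using mult_left_mono[of 1 "-u" "-u"] by (simp add: power2_eq_square)
    also have "0 \<le> ln (1 - u)" using nonpos by simp
    finally show ?thesis .
  qed
next
  case False
  define h where "h x = ln (1 - x) + x + x^2" for x :: real
  have "h 0 \<le> h u"
  proof (rule DERIV_nonneg_imp_nondecreasing[of 0 u h])
    fix x assume x: "0 \<le> x" "x \<le> u"
    then have "x < 1" using assms by simp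
    then have "(h has_real_derivative x * (1 - 2 * x) / (1 - x)) (at x)"
      unfolding h_def by (auto intro!: derivative_eq_intros simp: field_simps)
    moreover have "x * (1 - 2 * x) / (1 - x) \<ge> 0"
      using x assms \<open>x < 1\<close> by simp
    ultimately show "\<exists>y. (h has_real_derivative y) (at x) \<and> 0 \<le> y" by blast
  qed (use False in simp)
  then show ?thesis by (simp add: h_def)
qed

lemma cn_power2_mgf_le:
  fixes t s2 z :: real
  assumes s2: "s2 > 0" and z: "z \<ge> 0" and t: "t * s2 \<le> 1/2"
  shows "exp (t * z / (1 - t * s2) - t * (z + s2)) / (1 - t * s2)
           \<le> exp ((s2^2 + 2 * s2 * z) * t^2)"
proof -
  define u where "u = t * s2"
  have u: "1 - u \<ge> 1/2" using t by (simp add: u_def)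
  have "t * z / (1 - u) - t * z = z * t^2 * s2 * (1 / (1 - u))"
    using u by (simp add: field_simps u_def power2_eq_square)
  also have "\<dots> \<le> z * t^2 * s2 * 2"
    using u s2 z by (intro mult_left_mono) (auto simp: field_simps)
  finally have shift: "t * z / (1 - u) - t * z \<le> 2 * s2 * z * t^2" by (simp add: mult_ac)
  have "t * z / (1 - u) - t * (z + s2) - ln (1 - u) \<le> 2 * s2 * z * t^2 - u - (- u - u^2)"
    using shift ln_one_minus_lower_bound[of u] t by (simp add: u_def algebra_simps)
  also have "\<dots> = (s2^2 + 2 * s2 * z) * t^2"
    by (simp add: u_def algebra_simps power2_eq_square)
  finally have "exp (t * z / (1 - u) - t * (z + s2) - ln (1 - u)) \<le> exp ((s2^2 + 2 * s2 * z) * t^2)"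
    by simp
  then show ?thesis
    using u by (simp add: u_def exp_diff)
qed

lemma nn_integral_lborel_affine:
  fixes f :: "'a::euclidean_space \<Rightarrow> ennreal" and c :: real
  assumes [measurable]: "f \<in> borel_measurable borel" and c: "c \<noteq> 0"
  shows "(\<integral>\<^sup>+x. f x \<partial>lborel) = \<bar>c\<bar>^DIM('a) * (\<integral>\<^sup>+x. f (t + c *\<^sub>R x) \<partial>lborel)"
  by (subst lborel_affine[OF c, of t])
     (simp add: nn_integral_density nn_integral_distr nn_integral_cmult)

lemma nn_integral_cn_density_standard:
  assumes v: "v > 0"
  shows "(\<integral>\<^sup>+z. cn_density m v z \<partial>lborel) = (\<integral>\<^sup>+z. cn_density 0 1 z \<partial>lborel)"
proof -
  have "(\<integral>\<^sup>+z. cn_density m v z \<partial>lborel)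
      = ennreal (\<bar>sqrt v\<bar> ^ DIM(complex)) * (\<integral>\<^sup>+z. cn_density m v (m + sqrt v *\<^sub>R z) \<partial>lborel)"
    using v by (intro nn_integral_lborel_affine) (auto simp: cn_density_def)
  also have "\<dots> = (\<integral>\<^sup>+z. ennreal v * cn_density m v (m + sqrt v *\<^sub>R z) \<partial>lborel)"
    using v by (subst nn_integral_cmult) (auto simp: cn_density_def)
  also have "\<dots> = (\<integral>\<^sup>+z. cn_density 0 1 z \<partial>lborel)"
  proof (intro nn_integral_cong)
    fix z :: complex
    have "cmod (sqrt v *\<^sub>R z) ^ 2 = v * cmod z ^ 2"
      using v by (simp add: power_mult_distrib)
    then show "ennreal v * cn_density m v (m + sqrt v *\<^sub>R z) = cn_density 0 1 z"
      using v by (simp add: cn_density_def flip: ennreal_mult)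
  qed
  finally show ?thesis .
qed

lemma cn_density_mult_exp:
  assumes s2: "s2 > 0" and c: "c = 1 - t * s2" "c > 0"
  shows "cn_density mu s2 z * exp (t * ((cmod z)^2 - a))
       = exp (t * (cmod mu)^2 / c - t * a) / c * cn_density (mu / of_real c) (s2 / c) z"
proof -
  have square: "- ((cmod (z - mu))^2 / s2) + t * ((cmod z)^2 - a)
      = (t * (cmod mu)^2 / c - t * a) - (cmod (z - mu / of_real c))^2 / (s2 / c)"
    using c s2 unfolding cmod_power2
    by (simp add: field_simps) (simp add: c(1) power2_eq_square algebra_simps)
  have "cn_density mu s2 z * exp (t * ((cmod z)^2 - a))
      = exp (- ((cmod (z - mu))^2 / s2) + t * ((cmod z)^2 - a)) / (pi * s2)"
    by (simp add: cn_density_def flip: exp_add)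
  also have "\<dots> = exp (t * (cmod mu)^2 / c - t * a) / c * cn_density (mu / of_real c) (s2 / c) z"
  proof -
    have split: "exp (A - B) / (pi * s2) = exp A / c * (exp (- B) / (pi * (s2 / c)))" for A B
      using c s2 by (simp add: exp_diff exp_minus field_simps)
    show ?thesis unfolding square split cn_density_def ..
  qed
  finally show ?thesis .
qed

lemma nn_integral_cn_density_mult_exp:
  assumes s2: "s2 > 0" and c: "c = 1 - t * s2" "c > 0"
  shows "(\<integral>\<^sup>+z. cn_density mu s2 z * ennreal (exp (t * ((cmod z)^2 - a))) \<partial>lborel)
       = exp (t * (cmod mu)^2 / c - t * a) / c * (\<integral>\<^sup>+z. cn_density mu s2 z \<partial>lborel)"
proof -
  define K where "K = exp (t * (cmod mu)^2 / c - t * a) / c"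
  have K: "K \<ge> 0" using c by (simp add: K_def)
  have "cn_density mu s2 z * exp (t * ((cmod z)^2 - a)) = K * cn_density (mu / of_real c) (s2 / c) z"
    for z using cn_density_mult_exp[OF s2 c] by (simp add: K_def)
  then have "(\<integral>\<^sup>+z. cn_density mu s2 z * ennreal (exp (t * ((cmod z)^2 - a))) \<partial>lborel)
      = (\<integral>\<^sup>+z. ennreal K * cn_density (mu / of_real c) (s2 / c) z \<partial>lborel)"
    by (intro nn_integral_cong)
       (simp only: ennreal_mult''[symmetric, OF exp_ge_zero] ennreal_mult'[symmetric, OF K])
  also have "\<dots> = K * (\<integral>\<^sup>+z. cn_density (mu / of_real c) (s2 / c) z \<partial>lborel)"
    by (subst nn_integral_cmult) (auto simp: cn_density_def)
  also have "\<dots> = K * (\<integral>\<^sup>+z. cn_density mu s2 z \<partial>lborel)"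
    using nn_integral_cn_density_standard[of "s2 / c" "mu / of_real c"]
      nn_integral_cn_density_standard[of s2 mu] s2 c by simp
  finally show ?thesis by (simp add: K_def)
qed

context prob_space
begin

lemma cn_power2_mgf:
  assumes X: "distributed M lborel X (\<lambda>z. ennreal (cn_density mu s2 z))"
    and s2: "s2 > 0" and t: "t * s2 < 1"
  shows "(\<integral>\<^sup>+\<omega>. exp (t * ((cmod (X \<omega>))^2 - a)) \<partial>M)
       = exp (t * (cmod mu)^2 / (1 - t * s2) - t * a) / (1 - t * s2)"
proof -
  have total: "(\<integral>\<^sup>+z. cn_density mu s2 z \<partial>lborel) = 1"
    using distributed_emeasure[OF X, of UNIV] by (simp add: emeasure_space_1)
  have "(\<integral>\<^sup>+\<omega>. exp (t * ((cmod (X \<omega>))^2 - a)) \<partial>M)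
      = (\<integral>\<^sup>+z. cn_density mu s2 z * ennreal (exp (t * ((cmod z)^2 - a))) \<partial>lborel)"
    by (rule distributed_nn_integral[OF X, symmetric]) measurable
  also have "\<dots> = exp (t * (cmod mu)^2 / (1 - t * s2) - t * a) / (1 - t * s2)"
    using s2 t by (simp add: nn_integral_cn_density_mult_exp total)
  finally show ?thesis .
qed

lemma sum_cn_power2_mgf_le:
  assumes indep: "indep_vars (\<lambda>_. borel) X I" and I: "finite I"
    and X: "\<And>s. s \<in> I \<Longrightarrow> distributed M lborel (X s) (\<lambda>z. ennreal (cn_density mu s2 z))"
    and s2: "s2 > 0" and t: "t * s2 \<le> 1/2"
  shows "(\<integral>\<^sup>+\<omega>. exp (t * (\<Sum>s\<in>I. (cmod (X s \<omega>))^2 - ((cmod mu)^2 + s2))) \<partial>M)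
       \<le> exp (real (card I) * (s2^2 + 2 * s2 * (cmod mu)^2) * t^2)"
proof -
  let ?f = "(cmod mu)^2 + s2" and ?V = "s2^2 + 2 * s2 * (cmod mu)^2"
  have "(\<integral>\<^sup>+\<omega>. exp (t * (\<Sum>s\<in>I. (cmod (X s \<omega>))^2 - ?f)) \<partial>M)
      = (\<integral>\<^sup>+\<omega>. (\<Prod>s\<in>I. ennreal (exp (t * ((cmod (X s \<omega>))^2 - ?f)))) \<partial>M)"
    by (intro nn_integral_cong) (simp add: sum_distrib_left exp_sum prod_ennreal I)
  also have "\<dots> = (\<Prod>s\<in>I. \<integral>\<^sup>+\<omega>. exp (t * ((cmod (X s \<omega>))^2 - ?f)) \<partial>M)"
    by (intro indep_vars_nn_integral indep_vars_compose2[OF indep] I) auto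
  also have "\<dots> \<le> (\<Prod>s\<in>I. ennreal (exp (?V * t^2)))"
  proof (intro prod_mono_ennreal)
    fix s assume "s \<in> I"
    then have "(\<integral>\<^sup>+\<omega>. exp (t * ((cmod (X s \<omega>))^2 - ?f)) \<partial>M)
        = exp (t * (cmod mu)^2 / (1 - t * s2) - t * ?f) / (1 - t * s2)"
      using X s2 t by (intro cn_power2_mgf) auto
    also have "\<dots> \<le> ennreal (exp (?V * t^2))"
      using cn_power2_mgf_le[OF s2 _ t] by (intro ennreal_leI) simp
    finally show "(\<integral>\<^sup>+\<omega>. exp (t * ((cmod (X s \<omega>))^2 - ?f)) \<partial>M) \<le> ennreal (exp (?V * t^2))" .
  qed
  also have "\<dots> = exp (real (card I) * ?V * t^2)"
    by (simp add: mult.assoc exp_of_nat_mult ennreal_power)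
  finally show ?thesis .
qed

lemma Chernoff_prob_ge:
  assumes [measurable]: "D \<in> borel_measurable M" and t: "t > 0" and B: "B \<ge> 0"
    and mgf: "(\<integral>\<^sup>+\<omega>. exp (t * D \<omega>) \<partial>M) \<le> ennreal B"
  shows "prob {\<omega> \<in> space M. a \<le> D \<omega>} \<le> exp (- t * a) * B"
proof -
  have "emeasure M {\<omega> \<in> space M. a \<le> D \<omega>}
      \<le> exp (- t * a) * (\<integral>\<^sup>+\<omega>. ennreal (exp (t * D \<omega>)) * indicator (space M) \<omega> \<partial>M)"
    by (rule Chernoff_ineq_nn_integral_ge[OF t]) auto
  also have "(\<integral>\<^sup>+\<omega>. ennreal (exp (t * D \<omega>)) * indicator (space M) \<omega> \<partial>M) = (\<integral>\<^sup>+\<omega>. exp (t * D \<omega>) \<partial>M)"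
    by (rule nn_integral_cong) simp
  also have "ennreal (exp (- t * a)) * \<dots> \<le> ennreal (exp (- t * a)) * ennreal B"
    using mgf by (rule mult_left_mono) simp
  finally have "ennreal (prob {\<omega> \<in> space M. a \<le> D \<omega>}) \<le> ennreal (exp (- t * a) * B)"
    using B by (simp add: emeasure_eq_measure ennreal_mult'')
  then show ?thesis
    by (rule ennreal_le_iff[THEN iffD1, rotated]) (use B in simp)
qed

lemma sum_cn_power2_deviation_tail:
  assumes indep: "indep_vars (\<lambda>_. borel) X I" and I: "finite I"
    and X: "\<And>s. s \<in> I \<Longrightarrow> distributed M lborel (X s) (\<lambda>z. ennreal (cn_density mu s2 z))"
    and s2: "s2 > 0" and \<delta>: "0 < \<delta>" "\<delta> \<le> (s2^2 + 2 * s2 * (cmod mu)^2) / s2"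
    and \<sigma>: "\<bar>\<sigma>\<bar> = 1"
  shows "prob {\<omega> \<in> space M.
            real (card I) * \<delta> \<le> \<sigma> * (\<Sum>s\<in>I. (cmod (X s \<omega>))^2 - ((cmod mu)^2 + s2))}
         \<le> exp (- (real (card I) * \<delta>^2 / (4 * (s2^2 + 2 * s2 * (cmod mu)^2))))"
proof -
  define V where "V = s2^2 + 2 * s2 * (cmod mu)^2"
  define t where "t = \<delta> / (2 * V)"
  have V: "V > 0" using s2 by (simp add: V_def add_pos_nonneg)
  \<comment> \<open>\<open>t\<close> minimises the exponent \<open>V t\<^sup>2 - t \<delta>\<close>; the bound on \<open>\<delta>\<close> gives \<open>t s2 \<le> 1/2\<close>,
    where the MGF estimate holds.\<close>
  have t: "t > 0" "t * s2 \<le> 1/2"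
    using s2 \<delta> V by (auto simp: t_def V_def field_simps)
  have "\<sigma> * (t * s2) \<le> 1 * (t * s2)"
    using \<sigma> t s2 by (intro mult_right_mono) auto
  then have "(\<integral>\<^sup>+\<omega>. exp (t * (\<sigma> * (\<Sum>s\<in>I. (cmod (X s \<omega>))^2 - ((cmod mu)^2 + s2)))) \<partial>M)
      \<le> exp (real (card I) * V * (t * \<sigma>)^2)"
    using sum_cn_power2_mgf_le[OF indep I X s2, of "t * \<sigma>"] t
    by (simp add: V_def mult_ac)
  moreover have [measurable]: "X s \<in> borel_measurable M" if "s \<in> I" for s
    using distributed_measurable[OF X[OF that]] by simp
  ultimately have "prob {\<omega> \<in> space M.
        real (card I) * \<delta> \<le> \<sigma> * (\<Sum>s\<in>I. (cmod (X s \<omega>))^2 - ((cmod mu)^2 + s2))}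
      \<le> exp (- t * (real (card I) * \<delta>)) * exp (real (card I) * V * (t * \<sigma>)^2)"
    using t by (intro Chernoff_prob_ge) auto
  also have "\<dots> = exp (- (real (card I) * \<delta>^2 / (4 * V)))"
  proof -
    have "\<sigma>^2 = 1" using \<sigma> by (cases "\<sigma> \<ge> 0") auto
    then show ?thesis
      using V by (simp add: t_def power_mult_distrib field_simps power2_eq_square flip: exp_add)
  qed
  finally show ?thesis by (simp add: V_def)
qed

end

theorem lemma1:
  fixes M :: "'a measure" and X :: "nat \<Rightarrow> 'a \<Rightarrow> complex"
    and mu :: complex and s2 :: real and n :: nat and \<delta> :: real
  assumes "prob_space M"
    and "s2 > 0"
    and "prob_space.indep_vars M (\<lambda>_. borel) X UNIV"
    and "\<And>s. distributed M lborel (X s) (\<lambda>z. ennreal (cn_density mu s2 z))"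
    and "n \<ge> 1"
    and "0 < \<delta>"
    and "\<delta> \<le> (s2^2 + 2 * s2 * (cmod mu)^2) / s2"
  shows "measure M {\<omega> \<in> space M.
            \<bar>(\<Sum>s\<in>{1..n}. (cmod (X s \<omega>))^2) / real n - ((cmod mu)^2 + s2)\<bar> > \<delta>}
         \<le> 2 * exp (- ((real n * \<delta>^2) / (4 * (s2^2 + 2 * s2 * (cmod mu)^2))))"
proof -
  interpret prob_space M by fact
  let ?D = "\<lambda>\<omega>. \<Sum>s\<in>{1..n}. (cmod (X s \<omega>))^2 - ((cmod mu)^2 + s2)"
  let ?bound = "exp (- ((real n * \<delta>^2) / (4 * (s2^2 + 2 * s2 * (cmod mu)^2))))"
  have tail: "prob {\<omega> \<in> space M. real n * \<delta> \<le> \<sigma> * ?D \<omega>} \<le> ?bound" if "\<bar>\<sigma>\<bar> = 1" for \<sigma>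
    using sum_cn_power2_deviation_tail[OF indep_vars_subset[OF assms(3)] _ assms(4) assms(2,6,7) that,
        of "{1..n}"] by simp
  have [measurable]: "X s \<in> borel_measurable M" for s
    using distributed_measurable[OF assms(4)] by simp
  have "{\<omega> \<in> space M. \<bar>(\<Sum>s\<in>{1..n}. (cmod (X s \<omega>))^2) / real n - ((cmod mu)^2 + s2)\<bar> > \<delta>}
      \<subseteq> {\<omega> \<in> space M. real n * \<delta> \<le> 1 * ?D \<omega>} \<union> {\<omega> \<in> space M. real n * \<delta> \<le> -1 * ?D \<omega>}"
    using assms(5) by (auto simp: sum_subtractf field_simps)
  then have "prob {\<omega> \<in> space M. \<bar>(\<Sum>s\<in>{1..n}. (cmod (X s \<omega>))^2) / real n - ((cmod mu)^2 + s2)\<bar> > \<delta>}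
      \<le> prob {\<omega> \<in> space M. real n * \<delta> \<le> 1 * ?D \<omega>} + prob {\<omega> \<in> space M. real n * \<delta> \<le> -1 * ?D \<omega>}"
    by (intro order.trans[OF finite_measure_mono measure_subadditive]) auto
  also have "\<dots> \<le> 2 * ?bound"
    using tail[of 1] tail[of "-1"] by simp
  finally show ?thesis .
qed

end
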